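(* Let $(X,d)$ be a nonempty compact homogeneous metric space of diameter $D$, and let $m$ be a Borel probability measure on $X$ invariant under all isometries. Let $A=\int_{X\times X} d(x,y)\,d(m\times m)(x,y)$ and $\mu=1-(m\times m)(\Delta)$, where $\Delta$ is the diagonal of $X\times X$. If $A=\mu D$, then $X$ is finite, $d(x,y)=D$ for all $x\neq y$ in $X$ (i.e. $d$ is $D$ times the discrete metric), and $m$ is the uniform probability measure on $X$.
   Context: A metric space is homogeneous if its isometry group acts transitively on its points. *)

theory Defs
  imports "HOL-Probability.Probability"
begin

definition isometry :: "('a::metric_space \<Rightarrow> 'a) \<Rightarrow> bool" where
  "isometry f \<longleftrightarrow> bij f \<and> (\<forall>x y. dist (f x) (f y) = dist x y)"

definition homogeneous_space :: "'a::metric_space itself \<Rightarrow> bool" where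
  "homogeneous_space _ \<longleftrightarrow> (\<forall>x y::'a. \<exists>f. isometry f \<and> f x = y)"

end

theory Submission
  imports Defs
begin

(* Write D for the diameter and g(x,y) = D * [x \<noteq> y] - d(x,y).  Since
   d \<le> D everywhere and d = 0 on the diagonal, g is a bounded nonnegative function whose
   integral over m \<times> m is  (1 - (m \<times> m)(\<Delta>)) * D - A,  so the hypothesis says that it
   integrates to zero.  An isometry-invariant probability measure on a compact homogeneous
   space gives positive mass to every ball (finitely many translates of a null ball would
   cover the space).  Hence, if some pair x \<noteq> y had d(x,y) < D, then g would be bounded
   below by a positive constant on a product of two small balls around x and y, which has
   positive measure -- a contradiction.  So all distinct points are at distance D; a
   finite cover by balls of radius D then shows that X is finite, and invariance forces all
   singletons to carry the same mass.

   Some measure-theoretic bookkeeping comes first: the metric of a compact space is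
   measurable for the product of the Borel sigma-algebras, since it is an infimum over a
   countable dense set of sums of continuous functions of one variable. *)

section \<open>Compact metric spaces\<close>

lemma compact_finite_ball_cover:
  fixes r :: real
  assumes "compact (UNIV :: 'a::metric_space set)" "r > 0"
  obtains G :: "'a::metric_space set" where "finite G" "\<And>x. \<exists>c\<in>G. dist c x < r"
proof -
  have "UNIV \<subseteq> (\<Union>c\<in>UNIV. ball c r)" using assms(2) by auto
  from compactE_image[OF assms(1), of UNIV "\<lambda>c. ball c r", OF _ this] obtain G :: "'a set"
    where G: "finite G" "UNIV \<subseteq> (\<Union>c\<in>G. ball c r)" by auto
  have "\<exists>c\<in>G. dist c x < r" for x :: 'a using G(2) by (auto simp: subset_eq)
  with G(1) show ?thesis using that by blast
qed

text \<open>A compact metric space is separable (the union of finite \<open>1/(n+1)\<close>-nets is dense).\<close>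

lemma compact_countable_dense:
  assumes "compact (UNIV :: 'a::metric_space set)"
  obtains C :: "'a::metric_space set" where "countable C" "\<And>x e. e > 0 \<Longrightarrow> \<exists>c\<in>C. dist x c < e"
proof -
  have "\<forall>n. \<exists>G :: 'a set. finite G \<and> (\<forall>x. \<exists>c\<in>G. dist c x < 1 / real (Suc n))"
  proof
    fix n :: nat
    have "1 / real (Suc n) > 0" by simp
    from compact_finite_ball_cover[OF assms this] show "\<exists>G :: 'a set. finite G \<and>
      (\<forall>x. \<exists>c\<in>G. dist c x < 1 / real (Suc n))" by blast
  qed
  then obtain G :: "nat \<Rightarrow> 'a set"
    where G: "\<And>n. finite (G n)" "\<And>n x. \<exists>c\<in>G n. dist c x < 1 / real (Suc n)"
    by metis
  have "\<exists>c\<in>(\<Union>n. G n). dist x c < e" if "e > 0" for x and e :: real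
  proof -
    obtain n where "1 / real (Suc n) < e" using nat_approx_posE[OF \<open>e > 0\<close>] by blast
    moreover obtain c where "c \<in> G n" "dist c x < 1 / real (Suc n)" using G(2) by blast
    ultimately have "c \<in> (\<Union>n. G n)" "dist x c < e" by (auto simp: dist_commute)
    then show ?thesis by blast
  qed
  moreover have "countable (\<Union>n. G n)" using G(1) by (simp add: countable_finite)
  ultimately show ?thesis using that by blast
qed

lemma dist_eq_INF_dense:
  fixes C :: "'a::metric_space set"
  assumes dense: "\<And>x e. e > 0 \<Longrightarrow> \<exists>c\<in>C. dist x c < e"
  shows "dist x y = (INF c\<in>C. dist x c + dist c y)"
proof (rule order_antisym)
  have "C \<noteq> {}" using dense[of 1 x] by auto
  then show "dist x y \<le> (INF c\<in>C. dist x c + dist c y)"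
    by (rule cINF_greatest) (rule dist_triangle)
  have bdd: "bdd_below ((\<lambda>c. dist x c + dist c y) ` C)"
    by (rule bdd_belowI[of _ 0]) auto
  have "(INF c\<in>C. dist x c + dist c y) \<le> dist x y + e" if "e > 0" for e
  proof -
    obtain c where c: "c \<in> C" "dist x c < e / 2" using dense[of "e / 2" x] \<open>e > 0\<close> by auto
    have "(INF c\<in>C. dist x c + dist c y) \<le> dist x c + dist c y"
      by (rule cINF_lower[OF bdd c(1)])
    also have "\<dots> \<le> dist x c + (dist c x + dist x y)"
      using dist_triangle[of c y x] by simp
    also have "\<dots> \<le> dist x y + e" using c(2) by (simp add: dist_commute)
    finally show ?thesis .
  qed
  then show "(INF c\<in>C. dist x c + dist c y) \<le> dist x y"
    by (rule field_le_epsilon)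
qed

text \<open>Without second countability, \<open>borel \<Otimes>\<^sub>M borel\<close> may be smaller than the Borel sets of the
  product, so measurability of the metric needs the separability established above.\<close>

lemma borel_measurable_dist_pair:
  assumes "compact (UNIV :: 'a::metric_space set)"
  shows "(\<lambda>p. dist (fst p) (snd p)) \<in> borel_measurable (borel \<Otimes>\<^sub>M (borel :: 'a measure))"
proof -
  obtain C :: "'a set" where C: "countable C" "\<And>x e. e > 0 \<Longrightarrow> \<exists>c\<in>C. dist x c < e"
    using compact_countable_dense[OF assms] by blast
  have "(\<lambda>p. INF c\<in>C. dist (fst p) c + dist c (snd p))
          \<in> borel_measurable (borel \<Otimes>\<^sub>M (borel :: 'a measure))"
  proof (rule borel_measurable_cINF_real[OF C(1)])
    fix c :: 'a
    have "(\<lambda>x. dist x c) \<in> borel_measurable borel" "(\<lambda>x. dist c x) \<in> borel_measurable borel"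
      by (intro borel_measurable_continuous_onI continuous_intros)+
    from measurable_comp[OF measurable_fst this(1)] measurable_comp[OF measurable_snd this(2)]
    show "(\<lambda>p. dist (fst p) c + dist c (snd p)) \<in> borel_measurable (borel \<Otimes>\<^sub>M borel)"
      by (intro borel_measurable_add) (auto simp: o_def)
  qed
  moreover have "(\<lambda>p. dist (fst p) (snd p))
      = (\<lambda>p :: 'a \<times> 'a. INF c\<in>C. dist (fst p) c + dist c (snd p))"
    by (intro ext) (rule dist_eq_INF_dense[OF C(2)])
  ultimately show ?thesis by metis
qed

lemma diagonal_in_sets_pair_borel:
  assumes "compact (UNIV :: 'a::metric_space set)"
  shows "{p :: 'a \<times> 'a. fst p = snd p} \<in> sets (borel \<Otimes>\<^sub>M borel)"
proof -
  let ?B = "borel \<Otimes>\<^sub>M (borel :: 'a measure)"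
  have "(\<lambda>p. dist (fst p) (snd p)) -` {0} \<inter> space ?B \<in> sets ?B"
    by (rule measurable_sets[OF borel_measurable_dist_pair[OF assms]]) simp
  moreover have "(\<lambda>p. dist (fst p) (snd p)) -` {0} \<inter> space ?B = {p. fst p = snd p}"
    by (auto simp: space_pair_measure prod_eq_iff)
  ultimately show ?thesis by simp
qed

lemma dist_between_balls:
  fixes x y u v :: "'a::metric_space"
  assumes "dist x u < r" "dist y v < r"
  shows "dist u v < dist x y + 2 * r" "dist x y - 2 * r < dist u v"
proof -
  have "dist u v \<le> dist x u + dist x y + dist y v"
    using dist_triangle[of u v x] dist_triangle[of x v y] by (simp add: dist_commute)
  moreover have "dist x y \<le> dist x u + dist u v + dist y v"
    using dist_triangle[of x y u] dist_triangle[of u y v] by (simp add: dist_commute)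
  ultimately show "dist u v < dist x y + 2 * r" "dist x y - 2 * r < dist u v"
    using assms by linarith+
qed

section \<open>Invariant measures on homogeneous spaces\<close>

lemma isometry_vimage_ball:
  assumes "isometry f" "f y = x"
  shows "f -` ball x r = ball y r"
  using assms unfolding isometry_def by (auto simp: dist_commute)

text \<open>An isometry-invariant probability measure on a compact homogeneous space has full
  support: all balls of a given radius have equal mass, and finitely many of them cover.\<close>

lemma invariant_measure_ball_pos:
  fixes m :: "'a::metric_space measure"
  assumes compact: "compact (UNIV :: 'a set)"
    and homog: "homogeneous_space TYPE('a)"
    and borel: "sets m = sets borel"
    and prob: "prob_space m"
    and invariant: "\<And>f A. isometry f \<Longrightarrow> A \<in> sets m \<Longrightarrow> measure m (f -` A) = measure m A"
    and "r > 0"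
  shows "measure m (ball x r) > 0"
proof (rule ccontr)
  interpret prob_space m by (rule prob)
  assume "\<not> measure m (ball x r) > 0"
  then have null: "measure m (ball x r) = 0" using measure_nonneg[of m "ball x r"] by linarith
  have all_null: "measure m (ball y r) = 0" for y
  proof -
    obtain f where f: "isometry f" "f y = x"
      using homog unfolding homogeneous_space_def by blast
    have "measure m (f -` ball x r) = measure m (ball x r)"
      by (rule invariant[OF f(1)]) (simp add: borel)
    with isometry_vimage_ball[OF f] null show ?thesis by simp
  qed
  obtain G :: "'a set" where G: "finite G" "\<And>x. \<exists>c\<in>G. dist c x < r"
    using compact_finite_ball_cover[OF compact \<open>r > 0\<close>] by blast
  have "(\<Union>c\<in>G. ball c r) = space m"
    using G(2) sets_eq_imp_space_eq[OF borel] by auto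
  then have "1 = measure m (\<Union>c\<in>G. ball c r)" by (simp add: prob_space)
  also have "\<dots> \<le> (\<Sum>c\<in>G. measure m (ball c r))"
    by (rule finite_measure_subadditive_finite[OF G(1)]) (auto simp: borel)
  also have "\<dots> = 0" using all_null by simp
  finally show False by simp
qed

lemma invariant_measure_uniform:
  fixes m :: "'a::metric_space measure"
  assumes fin: "finite (UNIV :: 'a set)"
    and homog: "homogeneous_space TYPE('a)"
    and borel: "sets m = sets borel"
    and prob: "prob_space m"
    and invariant: "\<And>f A. isometry f \<Longrightarrow> A \<in> sets m \<Longrightarrow> measure m (f -` A) = measure m A"
  shows "measure m {x} = 1 / real (card (UNIV :: 'a set))"
proof -
  interpret prob_space m by (rule prob)
  have same: "measure m {y} = measure m {x}" for y
  proof -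
    obtain f where f: "isometry f" "f y = x"
      using homog unfolding homogeneous_space_def by blast
    then have "f -` {x} = {y}" unfolding isometry_def bij_def inj_def by auto
    then show ?thesis using invariant[OF f(1), of "{x}"] by (simp add: borel)
  qed
  have "1 = measure m UNIV" using prob_space sets_eq_imp_space_eq[OF borel] by simp
  also have "\<dots> = (\<Sum>y\<in>UNIV. measure m {y})"
    by (rule finite_measure_eq_sum_singleton[OF fin]) (simp add: borel)
  also have "\<dots> = (\<Sum>y\<in>(UNIV :: 'a set). measure m {x})"
    by (rule sum.cong[OF refl]) (rule same)
  also have "\<dots> = real (card (UNIV :: 'a set)) * measure m {x}"
    by simp
  finally have "real (card (UNIV :: 'a set)) * measure m {x} = 1" by simp
  then show ?thesis by (auto simp: eq_divide_eq mult.commute)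
qed

section \<open>The mean-distance inequality\<close>

lemma mean_dist_less:
  fixes m :: "'a::metric_space measure" and x y :: 'a
  assumes compact: "compact (UNIV :: 'a set)"
    and borel: "sets m = sets borel"
    and prob: "prob_space m"
    and full_support: "\<And>x r. r > 0 \<Longrightarrow> measure m (ball x r) > 0"
    and "x \<noteq> y" and short: "dist x y < diameter (UNIV :: 'a set)"
  shows "(\<integral>p. dist (fst p) (snd p) \<partial>(m \<Otimes>\<^sub>M m))
           < (1 - measure (m \<Otimes>\<^sub>M m) {p. fst p = snd p}) * diameter (UNIV :: 'a set)"
proof -
  define D where "D = diameter (UNIV :: 'a set)"
  define M2 where "M2 = m \<Otimes>\<^sub>M m"
  define \<Delta> where "\<Delta> = {p :: 'a \<times> 'a. fst p = snd p}"
  interpret m: prob_space m by (rule prob)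
  interpret M2: prob_space M2 unfolding M2_def by (rule prob_space_pair[OF prob prob])
  have space_M2: "space M2 = UNIV"
    using sets_eq_imp_space_eq[OF borel] by (simp add: M2_def space_pair_measure)
  have sets_M2: "sets M2 = sets (borel \<Otimes>\<^sub>M borel)"
    unfolding M2_def by (rule sets_pair_measure_cong[OF borel borel])
  have dist_le: "dist u v \<le> D" for u v :: 'a
    unfolding D_def by (rule diameter_bounded_bound[OF compact_imp_bounded[OF compact]]) auto
  have dist_meas: "(\<lambda>p. dist (fst p) (snd p)) \<in> borel_measurable M2"
    using measurable_cong_sets[OF sets_M2 refl] borel_measurable_dist_pair[OF compact] by blast
  have diag: "\<Delta> \<in> sets M2"
    unfolding sets_M2 \<Delta>_def by (rule diagonal_in_sets_pair_borel[OF compact])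
  then have off_diag: "UNIV - \<Delta> \<in> sets M2" using sets.compl_sets[of \<Delta> M2] space_M2 by simp

  define \<delta> where "\<delta> = (D - dist x y) / 3"
  define r where "r = min \<delta> (dist x y / 2)"
  define U where "U = ball x r"
  define V where "V = ball y r"
  have \<delta>_pos: "\<delta> > 0" and r_pos: "r > 0"
    using short \<open>x \<noteq> y\<close> by (simp_all add: \<delta>_def r_def D_def)
  have UV_gap: "dist u v \<le> D - \<delta> \<and> u \<noteq> v" if "u \<in> U" "v \<in> V" for u v
  proof -
    have "dist x u < r" "dist y v < r" using that by (auto simp: U_def V_def)
    note dist_between_balls[OF this]
    moreover have "r \<le> \<delta>" "r \<le> dist x y / 2" unfolding r_def by simp_all
    moreover have "3 * \<delta> = D - dist x y" unfolding \<delta>_def by simp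
    ultimately have "dist u v < D - \<delta>" "0 < dist u v" by linarith+
    then show ?thesis by auto
  qed

  define g where "g p = D * indicator (UNIV - \<Delta>) p - dist (fst p) (snd p)" for p :: "'a \<times> 'a"
  have dist_int: "integrable M2 (\<lambda>p. dist (fst p) (snd p))"
    by (rule M2.integrable_const_bound[where B = D]) (use dist_le dist_meas in auto)
  have ind_int: "integrable M2 (indicator (UNIV - \<Delta>) :: _ \<Rightarrow> real)"
    using off_diag by (simp add: less_top[symmetric])
  have "integral\<^sup>L M2 g = D * measure M2 (UNIV - \<Delta>) - (\<integral>p. dist (fst p) (snd p) \<partial>M2)"
    unfolding g_def using ind_int dist_int space_M2 by simp
  also have "measure M2 (UNIV - \<Delta>) = 1 - measure M2 \<Delta>"
    using M2.prob_compl[OF diag] space_M2 by simp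
  finally have int_g: "integral\<^sup>L M2 g
      = (1 - measure M2 \<Delta>) * D - (\<integral>p. dist (fst p) (snd p) \<partial>M2)"
    by (simp add: algebra_simps)

  have UV_sets: "U \<times> V \<in> sets M2" unfolding sets_M2 U_def V_def by simp
  have "emeasure M2 (U \<times> V) = emeasure m U * emeasure m V"
    unfolding M2_def by (rule m.emeasure_pair_measure_Times) (auto simp: borel U_def V_def)
  then have "measure M2 (U \<times> V) = measure m U * measure m V"
    by (simp add: M2.emeasure_eq_measure m.emeasure_eq_measure ennreal_mult'[symmetric])
  then have UV_pos: "measure M2 (U \<times> V) > 0"
    using full_support[OF r_pos] by (simp add: U_def V_def)
  have "\<delta> * measure M2 (U \<times> V) = (\<integral>p. \<delta> * indicator (U \<times> V) p \<partial>M2)"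
    using UV_sets space_M2 by simp
  also have "\<dots> \<le> integral\<^sup>L M2 g"
  proof (rule integral_mono)
    show "integrable M2 (\<lambda>p. \<delta> * indicator (U \<times> V) p)"
      using UV_sets by (simp add: less_top[symmetric])
    show "integrable M2 g" unfolding g_def using ind_int dist_int by simp
    show "\<delta> * indicator (U \<times> V) p \<le> g p" for p
      using UV_gap[of "fst p" "snd p"] dist_le[of "fst p" "snd p"] \<delta>_pos
      by (cases "p \<in> U \<times> V") (auto simp: g_def \<Delta>_def indicator_def mem_Times_iff)
  qed
  finally show ?thesis
    using int_g mult_pos_pos[OF \<delta>_pos UV_pos] by (simp add: M2_def \<Delta>_def D_def)
qed

text \<open>A compact space in which all distinct points are at distance equal to the diameter is
  finite: a finite cover by balls of that radius consists of singletons.\<close>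

lemma equidistant_compact_finite:
  assumes compact: "compact (UNIV :: 'a::metric_space set)"
    and equi: "\<And>x y::'a. x \<noteq> y \<Longrightarrow> dist x y = diameter (UNIV :: 'a set)"
  shows "finite (UNIV :: 'a set)"
proof (cases "diameter (UNIV :: 'a set) > 0")
  case True
  obtain G :: "'a set" where G: "finite G" "\<And>x. \<exists>c\<in>G. dist c x < diameter (UNIV :: 'a set)"
    using compact_finite_ball_cover[OF compact True] by blast
  have "x \<in> G" for x
  proof -
    obtain c where "c \<in> G" "dist c x < diameter (UNIV :: 'a set)" using G(2) by blast
    then show ?thesis using equi[of c x] by (cases "c = x") auto
  qed
  then have "UNIV \<subseteq> G" by blast
  then show ?thesis using G(1) finite_subset by blast
next
  case False
  then have "x = undefined" for x :: 'a
    using equi[of x undefined] zero_less_dist_iff[of x undefined] by (cases "x = undefined") auto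
  then have "UNIV \<subseteq> {undefined :: 'a}" by blast
  then show ?thesis using finite_subset by blast
qed

theorem proposition2p3:
  fixes m :: "'a::metric_space measure"
  assumes compact: "compact (UNIV :: 'a set)"
    and homog: "homogeneous_space TYPE('a)"
    and borel: "sets m = sets borel"
    and prob: "prob_space m"
    and invariant: "\<And>f A. isometry f \<Longrightarrow> A \<in> sets m \<Longrightarrow> measure m (f -` A) = measure m A"
    and eq: "(\<integral>p. dist (fst p) (snd p) \<partial>(m \<Otimes>\<^sub>M m))
             = (1 - measure (m \<Otimes>\<^sub>M m) {p. fst p = snd p}) * diameter (UNIV :: 'a set)"
  shows "finite (UNIV :: 'a set)
    \<and> (\<forall>x y::'a. x \<noteq> y \<longrightarrow> dist x y = diameter (UNIV :: 'a set))
    \<and> (\<forall>x::'a. measure m {x} = 1 / real (card (UNIV :: 'a set)))"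
proof -
  have full_support: "measure m (ball x r) > 0" if "r > 0" for x :: 'a and r
    using invariant_measure_ball_pos[OF compact homog borel prob invariant that] .
  have equi: "dist x y = diameter (UNIV :: 'a set)" if "x \<noteq> y" for x y :: 'a
  proof -
    have "dist x y \<le> diameter (UNIV :: 'a set)"
      by (rule diameter_bounded_bound[OF compact_imp_bounded[OF compact]]) auto
    moreover have "\<not> dist x y < diameter (UNIV :: 'a set)"
    proof
      assume "dist x y < diameter (UNIV :: 'a set)"
      from mean_dist_less[OF compact borel prob full_support that this] eq show False by simp
    qed
    ultimately show ?thesis by linarith
  qed
  have fin: "finite (UNIV :: 'a set)" by (rule equidistant_compact_finite[OF compact equi])
  show ?thesis
    using fin equi invariant_measure_uniform[OF fin homog borel prob invariant] by blast
qed

end
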